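(* For all $n\ge 2$, $|F_n(321,1243)|=n^2-3n+4$.
   Context: A permutation $\pi$ avoids a classical pattern $p\in S_k$ if no subsequence of $\pi$ of length $k$ is order-isomorphic to $p$. A Fishburn permutation is a permutation $\pi=\pi_1\cdots\pi_n$ of $[n]$ for which there are no indices $i<j$ with $\pi_j<\pi_i<\pi_{i+1}$ and $\pi_i=\pi_j+1$. $F_n(\sigma_1,\dots,\sigma_k)$ denotes the set of Fishburn permutations of length $n$ avoiding each of the classical patterns $\sigma_1,\dots,\sigma_k$. *)

theory Defs
  imports Main
begin

definition perm_of :: "nat \<Rightarrow> nat list \<Rightarrow> bool" where
  "perm_of n \<pi> \<longleftrightarrow> distinct \<pi> \<and> set \<pi> = {1..n}"

definition contains :: "nat list \<Rightarrow> nat list \<Rightarrow> bool" where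
  "contains \<pi> p \<longleftrightarrow> (\<exists>idx :: nat \<Rightarrow> nat.
      (\<forall>a b. a < b \<and> b < length p \<longrightarrow> idx a < idx b) \<and>
      (\<forall>a < length p. idx a < length \<pi>) \<and>
      (\<forall>a < length p. \<forall>b < length p. (\<pi> ! idx a < \<pi> ! idx b \<longleftrightarrow> p ! a < p ! b)))"

definition avoids :: "nat list \<Rightarrow> nat list \<Rightarrow> bool" where
  "avoids \<pi> p \<longleftrightarrow> \<not> contains \<pi> p"

definition fishburn :: "nat list \<Rightarrow> bool" where
  "fishburn \<pi> \<longleftrightarrow> \<not> (\<exists>i j. i < j \<and> j < length \<pi> \<and> i + 1 < length \<pi> \<and>
      \<pi> ! j < \<pi> ! i \<and> \<pi> ! i < \<pi> ! (i + 1) \<and> \<pi> ! i = \<pi> ! j + 1)"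

definition F :: "nat \<Rightarrow> nat list list \<Rightarrow> nat list set" where
  "F n \<sigma>s = {\<pi>. perm_of n \<pi> \<and> fishburn \<pi> \<and> (\<forall>\<sigma>\<in>set \<sigma>s. avoids \<pi> \<sigma>)}"

end

theory Submission
  imports Defs
begin

text \<open>Deleting a final entry n is a bijection from the members of F_n ending in n onto
  F_(n-1): the patterns and the Fishburn condition are inherited by prefixes, and none of them
  can be created by appending a new maximum, since in 321, 1243 and in the Fishburn configuration
  the last entry involved is not the largest one. Hence |F_n| = |F_(n-1)| + |G_n|, where G_n
  consists of the members whose last entry is not n. In such a permutation everything after n
  increases (no 321), and the Fishburn condition together with 1243-avoidance leaves only four
  shapes, determined by the position of n and by the first entry. There are 2n - 4 of them for
  n >= 3 and one for n = 2, and summing gives n^2 - 3n + 4.\<close>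

section \<open>Strictly increasing maps between intervals of naturals\<close>

lemma inj_on_interval_card_le:
  fixes f :: "nat \<Rightarrow> nat"
  assumes "inj_on f {s..<e}" and "f ` {s..<e} \<subseteq> {t..<u}"
  shows "e - s \<le> u - t"
  using card_inj_on_le[OF assms] by simp

lemma strict_mono_on_interval_eq:
  fixes f :: "nat \<Rightarrow> nat"
  assumes mono: "strict_mono_on {s..<e} f" and range: "f ` {s..<e} \<subseteq> {t..<t + (e - s)}"
    and i: "s \<le> i" "i < e"
  shows "f i = t + (i - s)"
proof -
  have inj: "inj_on f A" if "A \<subseteq> {s..<e}" for A
    using strict_mono_on_imp_inj_on[OF mono] that by (rule inj_on_subset)
  have "f ` {s..<i} \<subseteq> {t..<f i}"
  proof (rule image_subsetI)
    fix j assume "j \<in> {s..<i}"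
    then have "j \<in> {s..<e}" "f j < f i" using strict_mono_onD[OF mono, of j i] i by auto
    then have "f j \<in> {t..<t + (e - s)}" "f j < f i" using range by blast+
    then show "f j \<in> {t..<f i}" by simp
  qed
  then have "i - s \<le> f i - t" using inj_on_interval_card_le[OF inj] i by fastforce
  moreover have "f ` {Suc i..<e} \<subseteq> {Suc (f i)..<t + (e - s)}"
  proof (rule image_subsetI)
    fix j assume "j \<in> {Suc i..<e}"
    then have "j \<in> {s..<e}" "f i < f j" using strict_mono_onD[OF mono, of i j] i by auto
    then have "f j \<in> {t..<t + (e - s)}" "f i < f j" using range by blast+
    then show "f j \<in> {Suc (f i)..<t + (e - s)}" by simp
  qed
  then have "e - Suc i \<le> t + (e - s) - Suc (f i)"
    using inj_on_interval_card_le[OF inj, of "Suc i" e "Suc (f i)" "t + (e - s)"] i by fastforce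
  moreover have "f i \<in> {t..<t + (e - s)}" using range i by (simp add: image_subset_iff)
  ultimately show ?thesis by simp linarith
qed

section \<open>Pattern containment and the Fishburn condition\<close>

lemma contains_take: "contains (take k p) \<sigma> \<Longrightarrow> contains p \<sigma>"
  unfolding contains_def by (metis length_take min.strict_boundedE nth_take)

lemma contains_snoc_greater:
  assumes "contains (p @ [m]) \<sigma>" and "\<forall>x\<in>set p. x < m" and "\<exists>x\<in>set \<sigma>. last \<sigma> < x"
  shows "contains p \<sigma>"
proof -
  obtain idx where mono: "\<And>a b. a < b \<Longrightarrow> b < length \<sigma> \<Longrightarrow> idx a < idx b"
    and bound: "\<And>a. a < length \<sigma> \<Longrightarrow> idx a < Suc (length p)"
    and iso: "\<And>a b. a < length \<sigma> \<Longrightarrow> b < length \<sigma> \<Longrightarrow>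
                 (p @ [m]) ! idx a < (p @ [m]) ! idx b \<longleftrightarrow> \<sigma> ! a < \<sigma> ! b"
    using assms(1) unfolding contains_def length_append_singleton by blast
  obtain b where b: "b < length \<sigma>" "\<sigma> ! (length \<sigma> - 1) < \<sigma> ! b"
    using assms(3) by (metis in_set_conv_nth last_conv_nth list.size(3) not_less_zero)
  define l where "l = length \<sigma> - 1"
  \<comment> \<open>an occurrence using the new maximum would send the last pattern entry to it, although
    that entry is not the largest one of the pattern\<close>
  have "b < l" using b unfolding l_def by (cases "b = length \<sigma> - 1") auto
  have "idx l < length p"
  proof (rule ccontr)
    assume "\<not> idx l < length p"
    moreover have "idx l < Suc (length p)" using bound[of l] b(1) unfolding l_def by simp
    ultimately have "idx l = length p" by simp
    moreover have "idx b < length p"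
      using mono[of b l] \<open>b < l\<close> \<open>idx l = length p\<close> b(1) unfolding l_def by simp
    ultimately show False
      using iso[of l b] b assms(2) nth_mem unfolding l_def by (fastforce simp: nth_append)
  qed
  then have "idx a < length p" if "a < length \<sigma>" for a
  proof (cases "a = l")
    case False
    then have "idx a < idx l" using mono[of a l] that unfolding l_def by simp
    then show ?thesis using \<open>idx l < length p\<close> by simp
  qed (use \<open>idx l < length p\<close> in simp)
  then show ?thesis unfolding contains_def
    by (intro exI[of _ idx]) (use mono iso in \<open>auto simp: nth_append\<close>)
qed

lemma fishburn_take:
  assumes "fishburn p"
  shows "fishburn (take k p)"
  unfolding fishburn_def
proof clarify
  fix i j
  assume ij: "i < j" "j < length (take k p)" "i + 1 < length (take k p)"
    and "take k p ! j < take k p ! i" "take k p ! i < take k p ! (i + 1)"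
      "take k p ! i = take k p ! j + 1"
  moreover have "j < length p" "i + 1 < length p" using ij by auto
  moreover have "take k p ! x = p ! x" if "x \<le> j" for x using ij that by simp
  ultimately show False
    using assms unfolding fishburn_def by (metis less_eq_Suc_le Suc_eq_plus1 le_refl less_imp_le)
qed

lemma fishburn_snoc_greater:
  assumes "fishburn p" and "\<forall>x\<in>set p. x < m"
  shows "fishburn (p @ [m])"
  unfolding fishburn_def
proof clarify
  fix i j
  assume ij: "i < j" "j < length (p @ [m])" "i + 1 < length (p @ [m])"
    and desc: "(p @ [m]) ! j < (p @ [m]) ! i" "(p @ [m]) ! i < (p @ [m]) ! (i + 1)"
    and adj: "(p @ [m]) ! i = (p @ [m]) ! j + 1"
  have "i < length p" using ij by simp
  show False
  proof (cases "j = length p")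
    case True
    then show False using desc(1) assms(2) \<open>i < length p\<close> nth_mem by (fastforce simp: nth_append)
  next
    case False
    then have "j < length p" "i + 1 < length p" using ij by auto
    then show False using assms(1) ij(1) desc adj unfolding fishburn_def by (auto simp: nth_append)
  qed
qed

lemma contains_321_iff:
  "contains p [3,2,1] \<longleftrightarrow> (\<exists>i j k. i < j \<and> j < k \<and> k < length p \<and> p ! k < p ! j \<and> p ! j < p ! i)"
proof
  assume "contains p [3,2,1]"
  then obtain idx where mono: "\<forall>a b. a < b \<and> b < 3 \<longrightarrow> idx a < idx b"
    and bound: "\<forall>a < 3. idx a < length p"
    and iso: "\<forall>a < 3. \<forall>b < 3. (p ! idx a < p ! idx b \<longleftrightarrow> [3,2,1::nat] ! a < [3,2,1] ! b)"
    unfolding contains_def by (simp add: eval_nat_numeral) blast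
  have "idx 0 < idx 1" "idx 1 < idx 2" "idx 2 < length p" using mono bound by auto
  moreover have "p ! idx 1 < p ! idx 0" "p ! idx 2 < p ! idx 1"
    using iso[rule_format, of 1 0] iso[rule_format, of 2 1] by auto
  ultimately show "\<exists>i j k. i < j \<and> j < k \<and> k < length p \<and> p ! k < p ! j \<and> p ! j < p ! i"
    by blast
next
  assume "\<exists>i j k. i < j \<and> j < k \<and> k < length p \<and> p ! k < p ! j \<and> p ! j < p ! i"
  then obtain i j k where "i < j" "j < k" "k < length p" "p ! k < p ! j" "p ! j < p ! i" by blast
  moreover have "(a::nat) < 3 \<longleftrightarrow> a = 0 \<or> a = 1 \<or> a = 2" for a by auto
  ultimately show "contains p [3,2,1]" unfolding contains_def
    by (intro exI[of _ "\<lambda>a. if a = 0 then i else if a = 1 then j else k"]) auto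
qed

lemma contains_1243_iff:
  "contains p [1,2,4,3] \<longleftrightarrow> (\<exists>i j k l. i < j \<and> j < k \<and> k < l \<and> l < length p \<and>
      p ! i < p ! j \<and> p ! j < p ! l \<and> p ! l < p ! k)"
proof
  assume "contains p [1,2,4,3]"
  then obtain idx where mono: "\<forall>a b. a < b \<and> b < 4 \<longrightarrow> idx a < idx b"
    and bound: "\<forall>a < 4. idx a < length p"
    and iso: "\<forall>a < 4. \<forall>b < 4. (p ! idx a < p ! idx b \<longleftrightarrow> [1,2,4,3::nat] ! a < [1,2,4,3] ! b)"
    unfolding contains_def by (simp add: eval_nat_numeral) blast
  have "idx 0 < idx 1" "idx 1 < idx 2" "idx 2 < idx 3" "idx 3 < length p" using mono bound by auto
  moreover have "p ! idx 0 < p ! idx 1" "p ! idx 1 < p ! idx 3" "p ! idx 3 < p ! idx 2"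
    using iso[rule_format, of 0 1] iso[rule_format, of 1 3] iso[rule_format, of 3 2] by auto
  ultimately show "\<exists>i j k l. i < j \<and> j < k \<and> k < l \<and> l < length p \<and>
      p ! i < p ! j \<and> p ! j < p ! l \<and> p ! l < p ! k"
    by blast
next
  assume "\<exists>i j k l. i < j \<and> j < k \<and> k < l \<and> l < length p \<and>
      p ! i < p ! j \<and> p ! j < p ! l \<and> p ! l < p ! k"
  then obtain i j k l where "i < j" "j < k" "k < l" "l < length p"
      "p ! i < p ! j" "p ! j < p ! l" "p ! l < p ! k" by blast
  moreover have "(a::nat) < 4 \<longleftrightarrow> a = 0 \<or> a = 1 \<or> a = 2 \<or> a = 3" for a by auto
  ultimately show "contains p [1,2,4,3]" unfolding contains_def
    by (intro exI[of _ "\<lambda>a. if a = 0 then i else if a = 1 then j else if a = 2 then k else l"]) auto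
qed

definition fishburn_321_1243 :: "nat list \<Rightarrow> bool" where
  "fishburn_321_1243 p \<longleftrightarrow> fishburn p \<and> avoids p [3,2,1] \<and> avoids p [1,2,4,3]"

lemma fishburn_321_1243_take: "fishburn_321_1243 p \<Longrightarrow> fishburn_321_1243 (take k p)"
  using contains_take fishburn_take unfolding fishburn_321_1243_def avoids_def by blast

lemma fishburn_321_1243_snoc_greater:
  assumes "fishburn_321_1243 p" and "\<forall>x\<in>set p. x < m"
  shows "fishburn_321_1243 (p @ [m])"
  using assms fishburn_snoc_greater contains_snoc_greater[of p m "[3,2,1]"]
    contains_snoc_greater[of p m "[1,2,4,3]"]
  unfolding fishburn_321_1243_def avoids_def by auto

section \<open>Removing a final maximum\<close>

lemma perm_of_length: "perm_of n p \<Longrightarrow> length p = n"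
  unfolding perm_of_def by (metis card_atLeastAtMost diff_Suc_1 distinct_card)

lemma perm_of_snoc_iff: "perm_of (Suc m) (q @ [Suc m]) \<longleftrightarrow> perm_of m q"
proof -
  have "set q \<union> {Suc m} = {1..Suc m} \<longleftrightarrow> set q = {1..m}" if "Suc m \<notin> set q"
    using that insert_ident[of "Suc m" "set q" "{1..m}"] by (simp add: atLeastAtMostSuc_conv)
  moreover have "Suc m \<notin> set q" if "set q = {1..m}" using that by simp
  ultimately show ?thesis unfolding perm_of_def by auto
qed

lemma finite_perm_of: "finite {p. perm_of n p}"
proof (rule finite_subset)
  show "{p. perm_of n p} \<subseteq> {xs. set xs \<subseteq> {1..n} \<and> length xs = n}"
    using perm_of_length unfolding perm_of_def by auto
qed (simp add: finite_lists_length_eq)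

definition F_321_1243 :: "nat \<Rightarrow> nat list set" where
  "F_321_1243 n = {p. perm_of n p \<and> fishburn_321_1243 p}"

definition max_not_last :: "nat \<Rightarrow> nat list set" where
  "max_not_last n = {p \<in> F_321_1243 n. last p \<noteq> n}"

lemma F_321_1243_Suc:
  "F_321_1243 (Suc m) = (\<lambda>q. q @ [Suc m]) ` F_321_1243 m \<union> max_not_last (Suc m)"
proof (intro equalityI subsetI)
  fix p assume p: "p \<in> F_321_1243 (Suc m)"
  show "p \<in> (\<lambda>q. q @ [Suc m]) ` F_321_1243 m \<union> max_not_last (Suc m)"
  proof (cases "last p = Suc m")
    case True
    have "p \<noteq> []" using p perm_of_length unfolding F_321_1243_def by fastforce
    then have p_eq: "p = butlast p @ [Suc m]" using True by (metis append_butlast_last_id)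
    have "perm_of m (butlast p)"
      using p p_eq perm_of_snoc_iff unfolding F_321_1243_def by (metis mem_Collect_eq)
    moreover have "fishburn_321_1243 (butlast p)"
      using p fishburn_321_1243_take unfolding F_321_1243_def butlast_conv_take by blast
    ultimately show ?thesis using p_eq unfolding F_321_1243_def by blast
  qed (use p in \<open>simp add: max_not_last_def\<close>)
next
  fix p assume "p \<in> (\<lambda>q. q @ [Suc m]) ` F_321_1243 m \<union> max_not_last (Suc m)"
  then show "p \<in> F_321_1243 (Suc m)"
  proof
    assume "p \<in> (\<lambda>q. q @ [Suc m]) ` F_321_1243 m"
    then obtain q where q: "p = q @ [Suc m]" "perm_of m q" "fishburn_321_1243 q"
      unfolding F_321_1243_def by auto
    then have "\<forall>x\<in>set q. x < Suc m" unfolding perm_of_def by auto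
    then show ?thesis using q perm_of_snoc_iff fishburn_321_1243_snoc_greater
      unfolding F_321_1243_def by blast
  qed (simp add: max_not_last_def)
qed

lemma card_F_321_1243_Suc:
  "card (F_321_1243 (Suc m)) = card (F_321_1243 m) + card (max_not_last (Suc m))"
proof -
  have finite: "finite (F_321_1243 k)" for k
    using finite_perm_of by (rule finite_subset[rotated]) (auto simp: F_321_1243_def)
  have "(\<lambda>q. q @ [Suc m]) ` F_321_1243 m \<inter> max_not_last (Suc m) = {}"
    unfolding max_not_last_def by auto
  moreover have "inj (\<lambda>q. q @ [Suc m])" by (rule injI) simp
  ultimately show ?thesis unfolding F_321_1243_Suc
    using finite by (simp add: card_Un_disjoint card_image inj_on_subset max_not_last_def)
qed

section \<open>The permutations whose maximum is not last\<close>

lemma map_upt_in_max_not_last: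
  assumes "inj_on g {..<n}" and "\<And>i. i < n \<Longrightarrow> 1 \<le> g i \<and> g i \<le> n"
    and "\<And>i j k. i < j \<Longrightarrow> j < k \<Longrightarrow> k < n \<Longrightarrow> \<not> (g k < g j \<and> g j < g i)"
    and "\<And>i j k l. i < j \<Longrightarrow> j < k \<Longrightarrow> k < l \<Longrightarrow> l < n \<Longrightarrow>
           \<not> (g i < g j \<and> g j < g l \<and> g l < g k)"
    and "\<And>i j. i < j \<Longrightarrow> j < n \<Longrightarrow> i + 1 < n \<Longrightarrow> \<not> (g i < g (i + 1) \<and> g i = g j + 1)"
    and "n \<ge> 1" and "g (n - 1) \<noteq> n"
  shows "map g [0..<n] \<in> max_not_last n"
proof -
  have "g ` {..<n} = {1..n}"
    using assms(1,2) by (intro card_subset_eq) (auto simp: card_image)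
  then have "perm_of n (map g [0..<n])"
    using assms(1) unfolding perm_of_def by (simp add: distinct_map lessThan_atLeast0)
  moreover have "fishburn_321_1243 (map g [0..<n])"
  proof -
    let ?p = "map g [0..<n]"
    have nth: "\<And>i. i < n \<Longrightarrow> ?p ! i = g i" by simp
    have "\<not> contains ?p [3,2,1]"
    proof
      assume "contains ?p [3,2,1]"
      then obtain i j k where "i < j" "j < k" "k < n" "?p ! k < ?p ! j" "?p ! j < ?p ! i"
        unfolding contains_321_iff length_map length_upt by auto
      then show False using assms(3)[of i j k] nth[of i] nth[of j] nth[of k] by simp
    qed
    moreover have "\<not> contains ?p [1,2,4,3]"
    proof
      assume "contains ?p [1,2,4,3]"
      then obtain i j k l where "i < j" "j < k" "k < l" "l < n"
          "?p ! i < ?p ! j" "?p ! j < ?p ! l" "?p ! l < ?p ! k"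
        unfolding contains_1243_iff length_map length_upt by auto
      then show False using assms(4)[of i j k l] nth[of i] nth[of j] nth[of k] nth[of l] by simp
    qed
    moreover have "fishburn ?p"
    proof (unfold fishburn_def, clarify)
      fix i j
      assume "i < j" "j < length ?p" "i + 1 < length ?p"
        "?p ! j < ?p ! i" "?p ! i < ?p ! (i + 1)" "?p ! i = ?p ! j + 1"
      then show False using assms(5)[of i j] nth[of i] nth[of j] nth[of "i + 1"] by simp
    qed
    ultimately show ?thesis unfolding fishburn_321_1243_def avoids_def by blast
  qed
  moreover have "last (map g [0..<n]) = g (n - 1)" using assms(6) by (simp add: last_map)
  ultimately show ?thesis using assms(7) unfolding max_not_last_def F_321_1243_def by simp
qed

text \<open>The four shapes, in one-line notation: n 1 2 ... (n-1); 1 n 2 ... (n-1);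
  a 1 n 2 ... (a-1) (a+1) ... (n-1); and a 1 (a+1) ... n 2 ... (a-1).\<close>

definition max_first :: "nat \<Rightarrow> nat list" where
  "max_first n = map (\<lambda>i. if i = 0 then n else i) [0..<n]"

definition max_second :: "nat \<Rightarrow> nat list" where
  "max_second n = map (\<lambda>i. if i = 0 then 1 else if i = 1 then n else i) [0..<n]"

definition max_third :: "nat \<Rightarrow> nat \<Rightarrow> nat list" where
  "max_third n a = map (\<lambda>i. if i = 0 then a else if i = 1 then 1 else if i = 2 then n
      else if i \<le> a then i - 1 else i) [0..<n]"

definition max_late :: "nat \<Rightarrow> nat \<Rightarrow> nat list" where
  "max_late n a = map (\<lambda>i. if i = 0 then a else if i = 1 then 1
      else if i \<le> n + 1 - a then a + i - 1 else i + a - n) [0..<n]"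

definition shapes :: "nat \<Rightarrow> nat list set" where
  "shapes n = {max_first n} \<union> (if 3 \<le> n then {max_second n} else {})
     \<union> (if 4 \<le> n then max_third n ` {2..<n} else {}) \<union> max_late n ` {3..n - 2}"

lemma max_first_mem: "n \<ge> 2 \<Longrightarrow> max_first n \<in> max_not_last n"
  unfolding max_first_def by (rule map_upt_in_max_not_last) (auto simp: inj_on_def)

lemma max_second_mem: "n \<ge> 3 \<Longrightarrow> max_second n \<in> max_not_last n"
  unfolding max_second_def by (rule map_upt_in_max_not_last) (auto simp: inj_on_def)

lemma max_third_mem: "2 \<le> a \<Longrightarrow> a < n \<Longrightarrow> n \<ge> 4 \<Longrightarrow> max_third n a \<in> max_not_last n"
  unfolding max_third_def by (rule map_upt_in_max_not_last) (auto simp: inj_on_def split: if_splits)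

lemma max_late_mem: "3 \<le> a \<Longrightarrow> a + 2 \<le> n \<Longrightarrow> max_late n a \<in> max_not_last n"
  unfolding max_late_def by (rule map_upt_in_max_not_last) (auto simp: inj_on_def split: if_splits)

locale max_not_last_perm =
  fixes n :: nat and p :: "nat list"
  assumes mem: "p \<in> max_not_last n" and n_ge_2: "n \<ge> 2"
begin

lemma length_p: "length p = n"
  using mem perm_of_length unfolding max_not_last_def F_321_1243_def by blast

lemma nth_bounds: "i < n \<Longrightarrow> 1 \<le> p ! i \<and> p ! i \<le> n"
  using mem length_p nth_mem unfolding max_not_last_def F_321_1243_def perm_of_def by fastforce

lemma nth_eq_iff: "i < n \<Longrightarrow> j < n \<Longrightarrow> p ! i = p ! j \<longleftrightarrow> i = j"
  using mem length_p nth_eq_iff_index_eq unfolding max_not_last_def F_321_1243_def perm_of_def by blast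

lemma value_pos: "1 \<le> v \<Longrightarrow> v \<le> n \<Longrightarrow> \<exists>i<n. p ! i = v"
  using mem length_p unfolding max_not_last_def F_321_1243_def perm_of_def
  by (metis (mono_tags) atLeastAtMost_iff in_set_conv_nth mem_Collect_eq)

lemma no_321: "i < j \<Longrightarrow> j < k \<Longrightarrow> k < n \<Longrightarrow> p ! k < p ! j \<Longrightarrow> p ! j < p ! i \<Longrightarrow> False"
  using mem length_p unfolding max_not_last_def F_321_1243_def fishburn_321_1243_def avoids_def
    contains_321_iff by blast

lemma no_1243:
  "i < j \<Longrightarrow> j < k \<Longrightarrow> k < l \<Longrightarrow> l < n \<Longrightarrow>
    p ! i < p ! j \<Longrightarrow> p ! j < p ! l \<Longrightarrow> p ! l < p ! k \<Longrightarrow> False"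
  using mem length_p unfolding max_not_last_def F_321_1243_def fishburn_321_1243_def avoids_def
    contains_1243_iff by blast

lemma predecessor_before:
  assumes "i + 1 < n" and "p ! i < p ! (i + 1)" and "2 \<le> p ! i"
  obtains j where "j < i" and "p ! j = p ! i - 1"
proof -
  have "1 \<le> p ! i - 1" "p ! i - 1 \<le> n" using nth_bounds[of i] assms by auto
  then obtain j where j: "j < n" "p ! j = p ! i - 1" using value_pos by blast
  have "fishburn p" using mem unfolding max_not_last_def F_321_1243_def fishburn_321_1243_def by blast
  then have "\<not> i < j" using assms j length_p unfolding fishburn_def by force
  moreover have "j \<noteq> i" using j assms(3) by auto
  ultimately have "j < i" by simp
  then show ?thesis using that j(2) by blast
qed

definition pos_max :: nat where "pos_max = (SOME i. i < n \<and> p ! i = n)"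

lemma pos_max: "pos_max < n" "p ! pos_max = n"
proof -
  have "\<exists>i. i < n \<and> p ! i = n" using value_pos[of n] n_ge_2 by auto
  then have "pos_max < n \<and> p ! pos_max = n" unfolding pos_max_def by (rule someI_ex)
  then show "pos_max < n" "p ! pos_max = n" by simp_all
qed

lemma pos_max_le: "pos_max + 2 \<le> n"
proof -
  have "last p = p ! (n - 1)" using length_p n_ge_2 by (subst last_conv_nth) auto
  then have "pos_max \<noteq> n - 1" using mem pos_max unfolding max_not_last_def by auto
  then show ?thesis using pos_max by simp
qed

lemma pos_max_less_last: "pos_max < n - 1"
  using pos_max_le by simp

lemma nth_less_n: "i < n \<Longrightarrow> i \<noteq> pos_max \<Longrightarrow> p ! i < n"
  using pos_max nth_bounds[of i] nth_eq_iff[of i pos_max] by fastforce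

lemma after_max_increasing: "strict_mono_on {pos_max + 1..<n} (\<lambda>i. p ! i)"
proof (rule strict_mono_onI)
  fix k l assume "k \<in> {pos_max + 1..<n}" "l \<in> {pos_max + 1..<n}" "k < l"
  moreover have "p ! k \<noteq> p ! l" using calculation nth_eq_iff by auto
  moreover have "p ! k < n" using calculation nth_less_n by auto
  ultimately show "p ! k < p ! l" using no_321[of pos_max k l] pos_max by fastforce
qed

lemma pos_max_0: "pos_max = 0 \<Longrightarrow> p = max_first n"
proof (rule nth_equalityI)
  assume pos: "pos_max = 0"
  fix i assume "i < length p"
  then have i: "i < n" using length_p by simp
  have "p ! i = 1 + (i - 1)" if "0 < i"
  proof (rule strict_mono_on_interval_eq[where s = 1 and e = n])
    show "strict_mono_on {1..<n} ((!) p)" using after_max_increasing pos by simp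
    show "(!) p ` {1..<n} \<subseteq> {1..<1 + (n - 1)}" using nth_bounds nth_less_n pos by fastforce
  qed (use i that in auto)
  then show "p ! i = max_first n ! i" using i pos pos_max unfolding max_first_def by auto
qed (simp add: length_p max_first_def)

lemma first_eq_1_if_ascent: "p ! 0 < p ! 1 \<Longrightarrow> p ! 0 = 1"
  using predecessor_before[of 0] nth_bounds[of 0] n_ge_2 by force

lemma pos_max_1: "pos_max = 1 \<Longrightarrow> p = max_second n"
proof (rule nth_equalityI)
  assume pos: "pos_max = 1"
  have first: "p ! 0 = 1" using first_eq_1_if_ascent pos pos_max nth_less_n[of 0] n_ge_2 by simp
  fix i assume "i < length p"
  then have i: "i < n" using length_p by simp
  have "p ! i = 2 + (i - 2)" if "1 < i"
  proof (rule strict_mono_on_interval_eq[where s = 2 and e = n])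
    show "strict_mono_on {2..<n} ((!) p)" using after_max_increasing pos by (simp add: numeral_2_eq_2)
    have "p ! k \<noteq> 1" if "k \<in> {2..<n}" for k using first nth_eq_iff[of k 0] that by auto
    then show "(!) p ` {2..<n} \<subseteq> {2..<2 + (n - 2)}"
      using nth_bounds nth_less_n pos n_ge_2 by fastforce
  qed (use i that in auto)
  then show "p ! i = max_second n ! i" using i first pos pos_max unfolding max_second_def by auto
qed (simp add: length_p max_second_def)

lemma after_max_less_second:
  assumes pos: "pos_max \<ge> 2" and ascent: "p ! 0 < p ! 1" and k: "pos_max < k" "k < n"
  shows "p ! k < p ! 1"
proof (rule ccontr)
  assume "\<not> p ! k < p ! 1"
  moreover have "p ! k \<noteq> p ! 1" using k pos nth_eq_iff[of k 1] by simp
  ultimately have "p ! 1 < p ! k" by simp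
  moreover have "p ! k < n" using k nth_less_n[of k] by simp
  ultimately show False using no_1243[of 0 1 pos_max k] k pos ascent pos_max(2) by simp
qed

lemma third_less_second:
  assumes pos: "pos_max \<ge> 2" and ascent: "p ! 0 < p ! 1"
  shows "p ! 2 < p ! 1"
proof (rule ccontr)
  have first: "p ! 0 = 1" using ascent by (rule first_eq_1_if_ascent)
  define y where "y = p ! (n - 1)"
  have "y < p ! 1" using after_max_less_second[of "n - 1"] pos ascent pos_max_le
    unfolding y_def by simp
  moreover have "y \<noteq> 1" using nth_eq_iff[of "n - 1" 0] first n_ge_2 unfolding y_def by simp
  ultimately have second_ge_3: "3 \<le> p ! 1" using nth_bounds[of "n - 1"] n_ge_2 unfolding y_def
    by simp
  assume "\<not> p ! 2 < p ! 1"
  moreover have "p ! 2 \<noteq> p ! 1" using nth_eq_iff[of 2 1] pos pos_max_le by simp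
  ultimately have "p ! 1 < p ! (1 + 1)" by (simp add: numeral_2_eq_2)
  then obtain j where "j < 1" "p ! j = p ! 1 - 1"
    using predecessor_before[of 1] second_ge_3 pos pos_max_le by fastforce
  then show False using first second_ge_3 by simp
qed

text \<open>An initial ascent forces p!0 = 1 (Fishburn), and then 1, p!2, n and the last entry would
  form 1243.\<close>

lemma second_lt_first:
  assumes pos: "pos_max \<ge> 2"
  shows "p ! 1 < p ! 0"
proof (rule ccontr)
  assume "\<not> p ! 1 < p ! 0"
  moreover have "p ! 0 \<noteq> p ! 1" using nth_eq_iff[of 0 1] n_ge_2 by simp
  ultimately have ascent: "p ! 0 < p ! 1" by simp
  have first: "p ! 0 = 1" using ascent by (rule first_eq_1_if_ascent)
  define y where "y = p ! (n - 1)"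
  have pos_ge_3: "pos_max \<ge> 3"
    using third_less_second[OF pos ascent] nth_less_n[of 1] pos pos_max pos_max_le
    by (cases "pos_max = 2") auto
  have "p ! 2 \<noteq> y" using nth_eq_iff[of 2 "n - 1"] pos_ge_3 pos_max_le unfolding y_def by simp
  moreover have "\<not> y < p ! 2"
    using no_321[of 1 2 "n - 1"] third_less_second[OF pos ascent] pos_ge_3 pos_max_le
    unfolding y_def by fastforce
  ultimately have "p ! 2 < y" by simp
  moreover have "p ! 0 < p ! 2"
    using first nth_eq_iff[of 2 0] nth_bounds[of 2] pos_max_le pos by fastforce
  moreover have "y < p ! pos_max"
    using nth_less_n[of "n - 1"] pos_max pos_max_le unfolding y_def by simp
  ultimately show False
    using no_1243[of 0 2 pos_max "n - 1"] pos_ge_3 pos_max_less_last unfolding y_def by simp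
qed

lemma second_eq_1:
  assumes pos: "pos_max \<ge> 2"
  shows "p ! 1 = 1"
proof (rule ccontr)
  assume ne: "p ! 1 \<noteq> 1"
  have descent: "p ! 1 < p ! 0" using second_lt_first[OF pos] .
  obtain s where s: "s < n" "p ! s = 1" using value_pos[of 1] n_ge_2 by auto
  have "s \<noteq> 0"
  proof
    assume "s = 0"
    then show False using s descent nth_bounds[of 1] n_ge_2 by simp
  qed
  moreover have "s \<noteq> 1" using s ne by auto
  ultimately have "1 < s" by simp
  moreover have "1 < p ! 1" using ne nth_bounds[of 1] n_ge_2 by simp
  ultimately show False using no_321[of 0 1 s] s descent by simp
qed

lemma after_pos_max_2:
  assumes pos: "pos_max = 2" and i: "3 \<le> i" "i < n"
  shows "p ! i = (if i \<le> p ! 0 then i - 1 else i)"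
proof -
  define a where "a = p ! 0"
  have second: "p ! 1 = 1" using second_eq_1 pos by simp
  have n_ge_4: "4 \<le> n" using pos_max_le pos by simp
  have a: "2 \<le> a" "a < n"
    using second_lt_first second nth_less_n[of 0] pos n_ge_4 unfolding a_def by auto
  have other: "p ! k \<noteq> a \<and> p ! k \<noteq> 1 \<and> p ! k \<noteq> n" if "3 \<le> k" "k < n" for k
    using that nth_eq_iff[of k 0] nth_eq_iff[of k 1] nth_eq_iff[of k 2] pos_max(2) pos second
      n_ge_4
    unfolding a_def by auto
  \<comment> \<open>closing the gap left by the value a turns the increasing tail into 2, 3, ..., n - 2\<close>
  define h where "h k = (if p ! k < a then p ! k else p ! k - 1)" for k
  have "h i = 2 + (i - 3)"
  proof (rule strict_mono_on_interval_eq[where s = 3 and e = n])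
    show "strict_mono_on {3..<n} h"
    proof (rule strict_mono_onI)
      fix k l assume "k \<in> {3..<n}" "l \<in> {3..<n}" "k < l"
      moreover have "p ! k < p ! l"
        using strict_mono_onD[OF after_max_increasing] calculation pos by simp
      ultimately show "h k < h l" using other[of k] other[of l] unfolding h_def by auto
    qed
    show "h ` {3..<n} \<subseteq> {2..<2 + (n - 3)}"
    proof (rule image_subsetI)
      fix k assume "k \<in> {3..<n}"
      then have "1 \<le> p ! k" "p ! k < n" "p ! k \<noteq> a" "p ! k \<noteq> 1"
        using nth_bounds[of k] nth_less_n[of k] other[of k] pos by auto
      then show "h k \<in> {2..<2 + (n - 3)}" using a n_ge_4 unfolding h_def by auto
    qed
  qed (use i in auto)
  then have "h i = i - 1" using i by simp
  then show ?thesis using other[of i] i unfolding h_def a_def[symmetric] by (auto split: if_splits)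
qed

lemma pos_max_2:
  assumes pos: "pos_max = 2"
  shows "4 \<le> n \<and> p ! 0 \<in> {2..<n} \<and> p = max_third n (p ! 0)"
proof -
  define a where "a = p ! 0"
  have second: "p ! 1 = 1" using second_eq_1 pos by simp
  have third: "p ! 2 = n" using pos_max(2) pos by simp
  have "p ! i = max_third n a ! i" if "i < n" for i
  proof (cases "i \<le> 2")
    case True
    then have "i = 0 \<or> i = 1 \<or> i = 2" by auto
    then show ?thesis using that second third unfolding a_def max_third_def by auto
  next
    case False
    then have "p ! i = (if i \<le> a then i - 1 else i)"
      using after_pos_max_2[OF pos _ that] unfolding a_def by simp
    then show ?thesis using that False unfolding max_third_def by simp
  qed
  then have "p = max_third n a"
    by (intro nth_equalityI) (simp_all add: length_p max_third_def)
  moreover have "2 \<le> a" using second_lt_first second pos unfolding a_def by simp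
  ultimately show ?thesis using nth_less_n[of 0] pos pos_max_le unfolding a_def by simp
qed

context
  assumes pos_ge_3: "pos_max \<ge> 3"
begin

lemma first_ge_2: "2 \<le> p ! 0"
  using second_lt_first second_eq_1 pos_ge_3 by fastforce

text \<open>An entry below p!0 between positions 1 and pos_max would form 1243 with 1, n and the
  last entry.\<close>

lemma middle_gt_first:
  assumes i: "2 \<le> i" "i < pos_max"
  shows "p ! 0 < p ! i"
proof (rule ccontr)
  define y where "y = p ! (n - 1)"
  have i_n: "i < n - 1" using i pos_max_less_last by simp
  assume "\<not> p ! 0 < p ! i"
  moreover have "p ! i \<noteq> p ! 0" using nth_eq_iff[of i 0] i_n i by simp
  ultimately have small: "p ! i < p ! 0" by simp
  have "p ! i \<noteq> y" "y \<noteq> p ! 0"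
    using nth_eq_iff[of i "n - 1"] nth_eq_iff[of "n - 1" 0] i_n i n_ge_2 unfolding y_def by auto
  moreover have "\<not> (y < p ! i \<and> p ! i < p ! 0)"
    using no_321[of 0 i "n - 1"] i i_n unfolding y_def by auto
  ultimately have "p ! i < y" using small by linarith
  moreover have "p ! 1 < p ! i"
    using second_eq_1 pos_ge_3 nth_eq_iff[of i 1] nth_bounds[of i] i i_n by fastforce
  moreover have "y < p ! pos_max" using nth_less_n[of "n - 1"] pos_max pos_max_less_last
    unfolding y_def by simp
  ultimately show False using no_1243[of 1 i pos_max "n - 1"] i pos_max_less_last
    unfolding y_def by simp
qed

lemma middle_increasing: "strict_mono_on {2..pos_max} (\<lambda>i. p ! i)"
proof (rule strict_mono_onI)
  fix i j assume ij: "i \<in> {2..pos_max}" "j \<in> {2..pos_max}" "i < j"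
  show "p ! i < p ! j"
  proof (cases "j = pos_max")
    case True
    then show ?thesis using nth_less_n[of i] ij pos_max by simp
  next
    case False
    define y where "y = p ! (n - 1)"
    have j: "j < pos_max" "j < n - 1" using ij False pos_max_less_last by auto
    have "p ! 1 < p ! j"
      using second_eq_1 pos_ge_3 middle_gt_first[of j] first_ge_2 ij j by simp
    moreover have "y < p ! pos_max" using nth_less_n[of "n - 1"] pos_max pos_max_less_last
      unfolding y_def by simp
    ultimately have "\<not> p ! j < y"
      using no_1243[of 1 j pos_max "n - 1"] ij j pos_max_less_last unfolding y_def by auto
    moreover have "p ! j \<noteq> y" using nth_eq_iff[of j "n - 1"] j unfolding y_def by simp
    ultimately have "y < p ! j" by simp
    moreover have "p ! i \<noteq> p ! j" using nth_eq_iff[of i j] ij j by simp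
    ultimately show ?thesis using no_321[of i j "n - 1"] ij j unfolding y_def by fastforce
  qed
qed

lemma after_max_less_third:
  assumes k: "pos_max < k" "k < n"
  shows "p ! k < p ! 2"
proof (rule ccontr)
  assume "\<not> p ! k < p ! 2"
  moreover have "p ! k \<noteq> p ! 2" using nth_eq_iff[of k 2] k pos_ge_3 by simp
  ultimately have "p ! 2 < p ! k" by simp
  moreover have "p ! 1 < p ! 2"
    using second_eq_1 pos_ge_3 middle_gt_first[of 2] first_ge_2 by simp
  moreover have "p ! k < p ! pos_max" using nth_less_n[of k] pos_max k by simp
  ultimately show False using no_1243[of 1 2 pos_max k] k pos_ge_3 by simp
qed

lemma third_eq: "p ! 2 = p ! 0 + 1"
proof -
  \<comment> \<open>by the Fishburn condition at the ascent p!2 < p!3, the value p!2 - 1 lies at position 0\<close>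
  have first_less: "p ! 0 < p ! 2" using middle_gt_first[of 2] pos_ge_3 by simp
  have "p ! 2 < p ! (2 + 1)"
    using strict_mono_onD[OF middle_increasing, of 2 3] pos_ge_3 by simp
  moreover have "2 \<le> p ! 2" using first_less first_ge_2 by simp
  moreover have "2 + 1 < n" using pos_ge_3 pos_max_less_last by simp
  ultimately obtain j where j: "j < 2" "p ! j = p ! 2 - 1"
    using predecessor_before[of 2] by blast
  have "j \<noteq> 1" using j second_eq_1 pos_ge_3 first_ge_2 first_less by auto
  then have "j = 0" using j by simp
  then show ?thesis using j first_less by simp
qed

lemma middle_values: "i \<in> {2..pos_max} \<Longrightarrow> p ! i \<in> {p ! 0 + 1..<n + 1}"
  using strict_mono_onD[OF middle_increasing, of 2 i] third_eq nth_bounds[of i] pos_max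
  by (cases "i = 2") auto

lemma after_max_values: "i \<in> {pos_max + 1..<n} \<Longrightarrow> p ! i \<in> {2..<p ! 0}"
proof -
  assume i: "i \<in> {pos_max + 1..<n}"
  then have "p ! i \<noteq> p ! 0" "p ! i \<noteq> p ! 1"
    using nth_eq_iff[of i 0] nth_eq_iff[of i 1] pos_ge_3 by auto
  then show ?thesis using after_max_less_third[of i] third_eq second_eq_1 pos_ge_3 nth_bounds[of i] i
    by auto
qed

lemma middle_length: "pos_max - 1 = n - p ! 0"
proof -
  have inj_middle: "inj_on ((!) p) {2..<pos_max + 1}"
    using strict_mono_on_imp_inj_on[OF middle_increasing]
    by (simp add: atLeastLessThanSuc_atLeastAtMost)
  have inj_after: "inj_on ((!) p) {pos_max + 1..<n}"
    using strict_mono_on_imp_inj_on[OF after_max_increasing] .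
  have "pos_max + 1 - 2 \<le> n + 1 - (p ! 0 + 1)"
    using inj_on_interval_card_le[OF inj_middle] middle_values by fastforce
  moreover have "n - (pos_max + 1) \<le> p ! 0 - 2"
    using inj_on_interval_card_le[OF inj_after] after_max_values by fastforce
  ultimately show ?thesis using first_ge_2 nth_less_n[of 0] pos_ge_3 pos_max_le by linarith
qed

lemma middle_eq:
  assumes "2 \<le> i" "i \<le> pos_max"
  shows "p ! i = (p ! 0 + 1) + (i - 2)"
proof (rule strict_mono_on_interval_eq[where s = 2 and e = "pos_max + 1"])
  show "strict_mono_on {2..<pos_max + 1} ((!) p)"
    using middle_increasing by (simp add: atLeastLessThanSuc_atLeastAtMost)
  show "(!) p ` {2..<pos_max + 1} \<subseteq> {p ! 0 + 1..<p ! 0 + 1 + (pos_max + 1 - 2)}"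
    using middle_values middle_length first_ge_2 pos_ge_3 by fastforce
qed (use assms in auto)

lemma after_max_eq:
  assumes "pos_max < i" "i < n"
  shows "p ! i = 2 + (i - (pos_max + 1))"
proof (rule strict_mono_on_interval_eq[where s = "pos_max + 1" and e = n])
  show "strict_mono_on {pos_max + 1..<n} ((!) p)" using after_max_increasing .
  show "(!) p ` {pos_max + 1..<n} \<subseteq> {2..<2 + (n - (pos_max + 1))}"
    using after_max_values middle_length first_ge_2 nth_less_n[of 0] pos_ge_3 pos_max_le
    by fastforce
qed (use assms in auto)

lemma pos_max_ge_3: "p ! 0 \<in> {3..n - 2} \<and> p = max_late n (p ! 0)"
proof -
  define a where "a = p ! 0"
  have len: "pos_max - 1 = n - a" using middle_length unfolding a_def .
  have "p ! i = max_late n a ! i" if i: "i < n" for i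
  proof -
    consider "i < 2" | "2 \<le> i" "i \<le> pos_max" | "pos_max < i" by linarith
    then show ?thesis
    proof cases
      case 1
      then show ?thesis using i second_eq_1 pos_ge_3 unfolding a_def max_late_def by (cases i) auto
    next
      case 2
      then have "p ! i = a + 1 + (i - 2)" using middle_eq unfolding a_def by blast
      moreover have "i \<le> n + 1 - a" using 2 len by linarith
      ultimately show ?thesis using i 2 unfolding max_late_def by simp
    next
      case 3
      then have "p ! i = 2 + (i - (pos_max + 1))" using after_max_eq i by blast
      moreover have "\<not> i \<le> n + 1 - a" "a \<le> n" using 3 len pos_ge_3 by linarith+
      ultimately show ?thesis using i 3 len pos_ge_3 unfolding max_late_def by simp
    qed
  qed
  then have "p = max_late n a"
    by (intro nth_equalityI) (simp_all add: length_p max_late_def)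
  moreover have "3 \<le> a" "a \<le> n - 2"
    using len pos_ge_3 pos_max_le first_ge_2 unfolding a_def by linarith+
  ultimately show ?thesis unfolding a_def by simp
qed

end

lemma mem_shapes: "p \<in> shapes n"
proof -
  consider "pos_max = 0" | "pos_max = 1" | "pos_max = 2" | "pos_max \<ge> 3" by linarith
  then show ?thesis
  proof cases
    case 1
    then show ?thesis using pos_max_0 unfolding shapes_def by simp
  next
    case 2
    then show ?thesis using pos_max_1 pos_max_le unfolding shapes_def by simp
  next
    case 3
    then show ?thesis using pos_max_2 unfolding shapes_def by auto
  next
    case 4
    then show ?thesis using pos_max_ge_3 unfolding shapes_def by auto
  qed
qed

end

lemma max_not_last_eq_shapes:
  assumes "n \<ge> 2"
  shows "max_not_last n = shapes n"
proof
  show "max_not_last n \<subseteq> shapes n"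
    using max_not_last_perm.mem_shapes assms unfolding max_not_last_perm_def by blast
  show "shapes n \<subseteq> max_not_last n"
    using assms max_first_mem max_second_mem max_third_mem max_late_mem unfolding shapes_def by auto
qed

lemma card_shapes:
  assumes n: "n \<ge> 2"
  shows "card (shapes n) = (if n = 2 then 1 else 2 * n - 4)"
proof -
  have first: "max_first n ! 0 = n" "max_second n ! 0 = 1" "max_third n a ! 0 = a"
    "max_late n a ! 0 = a" for a
    using n unfolding max_first_def max_second_def max_third_def max_late_def by simp_all
  have third: "max_third n a ! 2 = n" "max_late n b ! 2 = b + 1" if "4 \<le> n" "b \<in> {3..n - 2}" for a b
    using that unfolding max_third_def max_late_def by auto
  have inj: "inj_on (max_third n) A" "inj_on (max_late n) A" for A
    by (metis first(3) inj_onI, metis first(4) inj_onI)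
  define B where "B = (if 3 \<le> n then {max_second n} else {})"
  define C where "C = (if 4 \<le> n then max_third n ` {2..<n} else {})"
  define D where "D = max_late n ` {3..n - 2}"
  have disj_B: "{max_first n} \<inter> B = {}" using first n unfolding B_def by auto
  have disj_C: "({max_first n} \<union> B) \<inter> C = {}" using first n unfolding B_def C_def by force
  have disj_D: "({max_first n} \<union> B \<union> C) \<inter> D = {}"
  proof -
    have "max_third n a \<noteq> max_late n b" if "4 \<le> n" "b \<in> {3..n - 2}" for a b
    proof
      assume "max_third n a = max_late n b"
      then have "n = b + 1" using third[OF that] by metis
      then show False using that by simp
    qed
    then show ?thesis using first n unfolding B_def C_def D_def by force
  qed
  have "card (shapes n) = 1 + card B + card C + card D"
    unfolding shapes_def B_def[symmetric] C_def[symmetric] D_def[symmetric]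
    using disj_B disj_C disj_D by (simp add: card_Un_disjoint B_def C_def D_def)
  moreover have "card B = (if 3 \<le> n then 1 else 0)" "card C = (if 4 \<le> n then n - 2 else 0)"
    "card D = n - 4"
    unfolding B_def C_def D_def using card_image[OF inj(1)] card_image[OF inj(2)] by simp_all
  ultimately show ?thesis using n by auto
qed

lemma card_F_321_1243_1: "card (F_321_1243 1) = 1"
proof -
  have "F_321_1243 0 = {[]}"
    unfolding F_321_1243_def fishburn_321_1243_def perm_of_def avoids_def contains_321_iff
      contains_1243_iff fishburn_def by auto
  moreover have "last p = 1" if "perm_of 1 p" for p
  proof -
    have "p \<noteq> []" using that perm_of_length by fastforce
    then show ?thesis using that last_in_set unfolding perm_of_def by fastforce
  qed
  then have "max_not_last 1 = {}" unfolding max_not_last_def F_321_1243_def by auto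
  ultimately show ?thesis using card_F_321_1243_Suc[of 0] by simp
qed

lemma card_F_321_1243: "n \<ge> 2 \<Longrightarrow> card (F_321_1243 n) + 3 * n = n\<^sup>2 + 4"
proof (induction n rule: nat_induct_at_least)
  case base
  then show ?case
    using card_F_321_1243_Suc[of 1] card_F_321_1243_1 max_not_last_eq_shapes card_shapes
    by (simp add: numeral_2_eq_2)
next
  case (Suc n)
  then show ?case
    using card_F_321_1243_Suc[of n] max_not_last_eq_shapes[of "Suc n"] card_shapes[of "Suc n"]
    by (simp add: power2_eq_square algebra_simps)
qed

theorem mainTheorem6:
  fixes n :: nat
  assumes "n \<ge> 2"
  shows "card (F n [[3,2,1], [1,2,4,3]]) = n^2 + 4 - 3*n"
proof -
  have "F n [[3,2,1], [1,2,4,3]] = F_321_1243 n"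
    unfolding F_def F_321_1243_def fishburn_321_1243_def by auto
  then show ?thesis using card_F_321_1243[OF assms] by simp
qed

end
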